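(* Let $\Gamma$ be a Lie group with a left invariant metric, $\Gamma_0\triangleleft\Gamma$ the connected component of the identity, $\Gamma_i$ a sequence of discrete groups, and $f_i:\Gamma_i\to\Gamma$ a discrete approximation. Let $r>0$ be such that $B_e(r,\Gamma)\subset\Gamma_0$, and for each $i$ let $G_i\leq\Gamma_i$ be the subgroup generated by $f_i^{-1}(B_e(r,\Gamma))$. Then for $i$ large enough, $G_i$ is a normal subgroup of $\Gamma_i$.
   Context: A sequence of functions $f_i:\Gamma_i\to\Gamma$ is a discrete approximation if there is $R_0>0$ such that for large $i$, $f_i^{-1}(B_e(R_0,\Gamma))$ is a generating set of $\Gamma_i$ containing the identity, and for every $R>0$, $\varepsilon>0$ there is $i_0$ such that for all $i\geq i_0$: (1) $f_i^{-1}(B_e(R,\Gamma))$ is finite; (2) $f_i(\Gamma_i)$ intersects each ball of radius $\varepsilon$ centered at a point of $B_e(R,\Gamma)$; (3) for all $g_1,g_2\in f_i^{-1}(B_e(R,\Gamma))$, $d(f_i(g_1g_2^{-1}),f_i(g_1)f_i(g_2^{-1}))\leq\varepsilon$. *)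

theory Defs
  imports "HOL-Analysis.Analysis" "HOL-Algebra.Algebra"
begin

text \<open>Iterated directional derivatives: dderiv [v1,...,vk] f is the derivative of f
  first along vk, ..., last along v1.\<close>
fun dderiv :: "'a::real_normed_vector list \<Rightarrow> ('a \<Rightarrow> 'b::real_normed_vector) \<Rightarrow> 'a \<Rightarrow> 'b" where
  "dderiv [] f = f"
| "dderiv (v # vs) f = (\<lambda>x. vector_derivative (\<lambda>t. dderiv vs f (x + t *\<^sub>R v)) (at 0))"

definition smooth_on :: "'a::real_normed_vector set \<Rightarrow> 'a set \<Rightarrow> ('a \<Rightarrow> 'b::real_normed_vector) \<Rightarrow> bool" where
  "smooth_on V S f \<longleftrightarrow>
     (\<forall>vs\<in>lists V. continuous_on S (dderiv vs f) \<and>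
        (\<forall>v\<in>V. \<forall>x\<in>S. ((\<lambda>t. dderiv vs f (x + t *\<^sub>R v)) has_vector_derivative dderiv (v # vs) f x) (at 0)))"

text \<open>A chart on the topological space of type 'g modelled on the linear subspace V
  of the Euclidean space 'e (V plays the role of R^n; n = dim V may be 0).\<close>
definition is_chart :: "'e::euclidean_space set \<Rightarrow> ('g::topological_space set \<times> ('g \<Rightarrow> 'e)) \<Rightarrow> bool" where
  "is_chart V c \<longleftrightarrow> (case c of (U, \<phi>) \<Rightarrow>
      open U \<and> inj_on \<phi> U \<and> openin (top_of_set V) (\<phi> ` U) \<and>
      homeomorphism U (\<phi> ` U) \<phi> (inv_into U \<phi>))"

definition smooth_atlas :: "'e::euclidean_space set \<Rightarrow> ('g::topological_space set \<times> ('g \<Rightarrow> 'e)) set \<Rightarrow> bool" where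
  "smooth_atlas V A \<longleftrightarrow> subspace V \<and> (\<forall>c\<in>A. is_chart V c) \<and> \<Union>(fst ` A) = UNIV \<and>
     (\<forall>(U, \<phi>)\<in>A. \<forall>(W, \<psi>)\<in>A. smooth_on V (\<phi> ` (U \<inter> W)) (\<psi> \<circ> inv_into U \<phi>))"

definition lie_group :: "'e::euclidean_space itself \<Rightarrow> 'g::topological_space monoid \<Rightarrow> bool" where
  "lie_group _ G \<longleftrightarrow> group G \<and> carrier G = UNIV \<and>
     continuous_on UNIV (\<lambda>p. fst p \<otimes>\<^bsub>G\<^esub> snd p) \<and> continuous_on UNIV (\<lambda>x. inv\<^bsub>G\<^esub> x) \<and>
     (\<exists>(V::'e set) A. smooth_atlas V A \<and>
        (\<forall>(U1, \<phi>1)\<in>A. \<forall>(U2, \<phi>2)\<in>A. \<forall>(W, \<psi>)\<in>A.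
           smooth_on (V \<times> V) {(\<phi>1 a, \<phi>2 b) | a b. a \<in> U1 \<and> b \<in> U2 \<and> a \<otimes>\<^bsub>G\<^esub> b \<in> W}
             (\<lambda>(p, q). \<psi> (inv_into U1 \<phi>1 p \<otimes>\<^bsub>G\<^esub> inv_into U2 \<phi>2 q))) \<and>
        (\<forall>(U, \<phi>)\<in>A. \<forall>(W, \<psi>)\<in>A.
           smooth_on V {\<phi> a | a. a \<in> U \<and> inv\<^bsub>G\<^esub> a \<in> W} (\<lambda>p. \<psi> (inv\<^bsub>G\<^esub> (inv_into U \<phi> p)))))"

definition left_invariant_metric :: "'g::metric_space monoid \<Rightarrow> bool" where
  "left_invariant_metric G \<longleftrightarrow> (\<forall>g x y. dist (g \<otimes>\<^bsub>G\<^esub> x) (g \<otimes>\<^bsub>G\<^esub> y) = dist x y)"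

definition discrete_approximation ::
  "(nat \<Rightarrow> 'a monoid) \<Rightarrow> 'g::metric_space monoid \<Rightarrow> (nat \<Rightarrow> 'a \<Rightarrow> 'g) \<Rightarrow> bool" where
  "discrete_approximation Gs G f \<longleftrightarrow>
     (\<exists>R0>0. \<exists>N. \<forall>i\<ge>N.
        generate (Gs i) {g \<in> carrier (Gs i). f i g \<in> ball \<one>\<^bsub>G\<^esub> R0} = carrier (Gs i) \<and>
        \<one>\<^bsub>Gs i\<^esub> \<in> {g \<in> carrier (Gs i). f i g \<in> ball \<one>\<^bsub>G\<^esub> R0}) \<and>
     (\<forall>R>0. \<forall>\<epsilon>>0. \<exists>i0. \<forall>i\<ge>i0.
        finite {g \<in> carrier (Gs i). f i g \<in> ball \<one>\<^bsub>G\<^esub> R} \<and>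
        (\<forall>x\<in>ball \<one>\<^bsub>G\<^esub> R. f i ` carrier (Gs i) \<inter> ball x \<epsilon> \<noteq> {}) \<and>
        (\<forall>g1\<in>{g \<in> carrier (Gs i). f i g \<in> ball \<one>\<^bsub>G\<^esub> R}.
         \<forall>g2\<in>{g \<in> carrier (Gs i). f i g \<in> ball \<one>\<^bsub>G\<^esub> R}.
           dist (f i (g1 \<otimes>\<^bsub>Gs i\<^esub> inv\<^bsub>Gs i\<^esub> g2)) (f i g1 \<otimes>\<^bsub>G\<^esub> f i (inv\<^bsub>Gs i\<^esub> g2)) \<le> \<epsilon>))"

end

theory Submission
  imports Defs
begin

(* Write H_i for the subgroup G_i generated by f_i^-1(B(r)) and call p \<in> \<Gamma> captured if, for
   all large i, every x \<in> \<Gamma>_i with f_i(x) within r/4 of p lies in H_i. The identity is captured.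
   If q is captured and p is within r/4 of q, then for x with f_i(x) near p the density of
   f_i(\<Gamma>_i) gives y with f_i(y) near q, so y \<in> H_i, and almost multiplicativity puts y^-1 x in
   f_i^-1(B(r)); hence x \<in> H_i. Being captured thus spreads over the connected set \<Gamma>_0, and
   uniformly over its bounded parts, since the approximation makes balls of \<Gamma> totally bounded.
   Finally, for t in the generating set f_i^-1(B(R_0)) of \<Gamma>_i and s \<in> f_i^-1(B(r)), f_i(t s t^-1)
   is close to f_i(t) f_i(s) f_i(t)^-1 \<in> \<Gamma>_0, so H_i is invariant under conjugation by
   generators of \<Gamma>_i, i.e. normal. *)

lemma (in group) conj_generate_closed:
  assumes S: "S \<subseteq> carrier G" and c: "c \<in> carrier G"
    and conj_S: "\<And>s. s \<in> S \<Longrightarrow> c \<otimes> s \<otimes> inv c \<in> generate G S"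
    and h: "h \<in> generate G S"
  shows "c \<otimes> h \<otimes> inv c \<in> generate G S"
  using h
proof (induction h rule: generate.induct)
  case one
  then show ?case using c by (simp add: generate.one)
next
  case (incl h)
  then show ?case by (rule conj_S)
next
  case (inv h)
  then have "h \<in> carrier G" using S by auto
  then have "inv (c \<otimes> h \<otimes> inv c) = c \<otimes> inv h \<otimes> inv c"
    using c by (simp add: inv_mult_group m_assoc)
  then show ?case
    using generate_m_inv_closed[OF S conj_S[OF inv]] by simp
next
  case (eng h1 h2)
  then have "h1 \<in> carrier G" "h2 \<in> carrier G"
    using generate_in_carrier[OF S] by auto
  then have "c \<otimes> (h1 \<otimes> h2) \<otimes> inv c = (c \<otimes> h1 \<otimes> inv c) \<otimes> (c \<otimes> h2 \<otimes> inv c)"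
    using c by (simp add: inv_solve_left m_assoc)
  then show ?case using generate.eng[OF eng.IH] by simp
qed

lemma (in group) normal_generate_by_generators:
  assumes S: "S \<subseteq> carrier G" and T: "T \<subseteq> carrier G" and gen: "generate G T = carrier G"
    and conj: "\<And>t s. t \<in> T \<Longrightarrow> s \<in> S \<Longrightarrow> t \<otimes> s \<otimes> inv t \<in> generate G S"
    and conj_inv: "\<And>t s. t \<in> T \<Longrightarrow> s \<in> S \<Longrightarrow> inv t \<otimes> s \<otimes> t \<in> generate G S"
  shows "generate G S \<lhd> G"
proof -
  have "\<forall>h\<in>generate G S. c \<otimes> h \<otimes> inv c \<in> generate G S" if "c \<in> generate G T" for c
    using that
  proof (induction c rule: generate.induct)
    case one
    then show ?case using generate_in_carrier[OF S] by auto
  next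
    case (incl t)
    then show ?case using T conj conj_generate_closed[OF S] by blast
  next
    case (inv t)
    then have "t \<in> carrier G" using T by auto
    then show ?case using conj_inv[OF inv] conj_generate_closed[OF S, of "inv t"] by simp
  next
    case (eng c1 c2)
    then have c: "c1 \<in> carrier G" "c2 \<in> carrier G"
      using generate_in_carrier[OF T] by auto
    show ?case
    proof
      fix h assume h: "h \<in> generate G S"
      then have "h \<in> carrier G" using generate_in_carrier[OF S] by auto
      then have "c1 \<otimes> c2 \<otimes> h \<otimes> inv (c1 \<otimes> c2) = c1 \<otimes> (c2 \<otimes> h \<otimes> inv c2) \<otimes> inv c1"
        using c by (simp add: inv_mult_group m_assoc)
      then show "c1 \<otimes> c2 \<otimes> h \<otimes> inv (c1 \<otimes> c2) \<in> generate G S"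
        using eng.IH h by simp
    qed
  qed
  then show ?thesis
    unfolding normal_inv_iff using generate_is_subgroup[OF S] gen by auto
qed

lemma totally_bounded_obtains_net:
  fixes S :: "'a::metric_space set"
  assumes "totally_bounded S" and "e > 0"
  obtains K where "finite K" "K \<subseteq> S" "S \<subseteq> (\<Union>c\<in>K. ball c e)"
proof -
  have "e/2 > 0" using \<open>e > 0\<close> by simp
  then obtain k where k: "finite k" "S \<subseteq> (\<Union>x\<in>k. {y. dist x y < e/2})"
    using \<open>totally_bounded S\<close> unfolding totally_bounded_metric by blast
  define near where "near x = (SOME s. s \<in> S \<and> dist x s < e/2)" for x
  have near: "near x \<in> S \<and> dist x (near x) < e/2" if "\<exists>s\<in>S. dist x s < e/2" for x
    unfolding near_def by (rule someI_ex) (use that in blast)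
  let ?K = "near ` {x \<in> k. \<exists>s\<in>S. dist x s < e/2}"
  show ?thesis
  proof (rule that)
    show "finite ?K" using k by simp
    show "?K \<subseteq> S" using near by blast
    show "S \<subseteq> (\<Union>c\<in>?K. ball c e)"
    proof
      fix s assume "s \<in> S"
      then obtain x where x: "x \<in> k" "dist x s < e/2" using k by blast
      with \<open>s \<in> S\<close> have "near x \<in> S" "dist x (near x) < e/2" using near by blast+
      then have "dist (near x) s < e"
        using x dist_triangle3[of "near x" s x] by linarith
      then show "s \<in> (\<Union>c\<in>?K. ball c e)" using x \<open>s \<in> S\<close> by auto
    qed
  qed
qed

locale left_invariant_metric_group = group G for G :: "'g::metric_space monoid" (structure) +
  assumes carrier_UNIV: "carrier G = UNIV"
    and left_invariant: "left_invariant_metric G"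
    and continuous_mult: "continuous_on UNIV (\<lambda>p. fst p \<otimes> snd p)"
begin

lemma in_carrier [simp]: "x \<in> carrier G"
  using carrier_UNIV by simp

lemma dist_mult_left [simp]: "dist (g \<otimes> x) (g \<otimes> y) = dist x y"
  using left_invariant by (simp add: left_invariant_metric_def)

lemma dist_mult_one: "dist (a \<otimes> b) \<one> = dist b (inv a)"
  using dist_mult_left[of "inv a" "a \<otimes> b" \<one>] by (simp add: m_assoc[symmetric])

lemma dist_one_inv: "dist \<one> (inv a) = dist a \<one>"
  using dist_mult_one[of a \<one>] by (simp add: dist_commute)

lemma dist_one_mult_le: "dist \<one> (a \<otimes> b) \<le> dist \<one> a + dist \<one> b"
  using dist_triangle[of \<one> "a \<otimes> b" a] dist_mult_left[of a \<one> b] by simp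

lemma continuous_on_mult:
  assumes "continuous_on S g" and "continuous_on S h"
  shows "continuous_on S (\<lambda>x. g x \<otimes> h x)"
  using continuous_on_compose2[OF continuous_mult continuous_on_Pair[OF assms]] by simp

lemma conj_in_connected_component:
  assumes "b \<in> connected_component_set UNIV \<one>"
  shows "a \<otimes> b \<otimes> inv a \<in> connected_component_set UNIV \<one>"
proof -
  let ?C = "connected_component_set UNIV \<one>" and ?conj = "\<lambda>x. a \<otimes> x \<otimes> inv a"
  have "continuous_on ?C ?conj"
    by (intro continuous_on_mult continuous_on_const continuous_on_id)
  then have "connected (?conj ` ?C)"
    using connected_continuous_image connected_connected_component by blast
  moreover have "\<one> \<in> ?conj ` ?C"
    by (rule image_eqI[of _ _ \<one>]) (auto simp: connected_component_refl)
  ultimately have "?conj ` ?C \<subseteq> ?C"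
    by (intro connected_component_maximal) auto
  then show ?thesis using assms by blast
qed

end

locale discrete_approx = left_invariant_metric_group G for G :: "'g::metric_space monoid" (structure) +
  fixes Gs :: "nat \<Rightarrow> 'a monoid" and f :: "nat \<Rightarrow> 'a \<Rightarrow> 'g"
  assumes groups: "\<And>i. group (Gs i)"
    and approximation: "discrete_approximation Gs G f"
begin

abbreviation pre_ball :: "nat \<Rightarrow> real \<Rightarrow> 'a set" where
  "pre_ball i R \<equiv> {g \<in> carrier (Gs i). f i g \<in> ball \<one> R}"

definition accurate :: "nat \<Rightarrow> real \<Rightarrow> real \<Rightarrow> bool" where
  "accurate i R \<epsilon> \<longleftrightarrow>
     dist (f i \<one>\<^bsub>Gs i\<^esub>) \<one> \<le> \<epsilon> \<and>
     (\<forall>z\<in>ball \<one> R. \<exists>x\<in>carrier (Gs i). dist (f i x) z < \<epsilon>) \<and>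
     (\<forall>x\<in>pre_ball i R. \<forall>y\<in>pre_ball i R.
        dist (f i (x \<otimes>\<^bsub>Gs i\<^esub> inv\<^bsub>Gs i\<^esub> y)) (f i x \<otimes> f i (inv\<^bsub>Gs i\<^esub> y)) \<le> \<epsilon>)"

lemma accurateD:
  assumes "accurate i R \<epsilon>"
  shows accurate_one: "dist (f i \<one>\<^bsub>Gs i\<^esub>) \<one> \<le> \<epsilon>"
    and accurate_dense: "z \<in> ball \<one> R \<Longrightarrow> \<exists>x\<in>carrier (Gs i). dist (f i x) z < \<epsilon>"
    and accurate_mult_inv: "x \<in> pre_ball i R \<Longrightarrow> y \<in> pre_ball i R \<Longrightarrow>
      dist (f i (x \<otimes>\<^bsub>Gs i\<^esub> inv\<^bsub>Gs i\<^esub> y)) (f i x \<otimes> f i (inv\<^bsub>Gs i\<^esub> y)) \<le> \<epsilon>"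
  using assms unfolding accurate_def by auto

lemma eventually_generating:
  obtains R0 where "R0 > 0"
    and "eventually (\<lambda>i. generate (Gs i) (pre_ball i R0) = carrier (Gs i) \<and>
                         \<one>\<^bsub>Gs i\<^esub> \<in> pre_ball i R0) sequentially"
  using approximation unfolding discrete_approximation_def eventually_sequentially by blast

lemma eventually_approximation:
  assumes "R > 0" and "\<epsilon> > 0"
  shows "eventually (\<lambda>i. finite (pre_ball i R) \<and>
      (\<forall>z\<in>ball \<one> R. f i ` carrier (Gs i) \<inter> ball z \<epsilon> \<noteq> {}) \<and>
      (\<forall>x\<in>pre_ball i R. \<forall>y\<in>pre_ball i R.
         dist (f i (x \<otimes>\<^bsub>Gs i\<^esub> inv\<^bsub>Gs i\<^esub> y)) (f i x \<otimes> f i (inv\<^bsub>Gs i\<^esub> y)) \<le> \<epsilon>)) sequentially"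
  using approximation assms unfolding discrete_approximation_def eventually_sequentially by blast

lemma eventually_accurate:
  assumes "R > 0" and "\<epsilon> > 0"
  shows "eventually (\<lambda>i. accurate i R \<epsilon>) sequentially"
proof -
  obtain R0 where "R0 > 0"
    and gen: "eventually (\<lambda>i. generate (Gs i) (pre_ball i R0) = carrier (Gs i) \<and>
                               \<one>\<^bsub>Gs i\<^esub> \<in> pre_ball i R0) sequentially"
    by (rule eventually_generating)
  from gen eventually_approximation[OF \<open>R0 > 0\<close> \<open>\<epsilon> > 0\<close>] eventually_approximation[OF assms]
  show ?thesis
  proof eventually_elim
    case (elim i)
    interpret Gi: group "Gs i" by (rule groups)
    let ?e = "f i \<one>\<^bsub>Gs i\<^esub>"
    have "dist (f i (\<one>\<^bsub>Gs i\<^esub> \<otimes>\<^bsub>Gs i\<^esub> inv\<^bsub>Gs i\<^esub> \<one>\<^bsub>Gs i\<^esub>)) (?e \<otimes> f i (inv\<^bsub>Gs i\<^esub> \<one>\<^bsub>Gs i\<^esub>)) \<le> \<epsilon>"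
      using elim(1,2) by blast
    then have "dist ?e (?e \<otimes> ?e) \<le> \<epsilon>" by simp
    moreover have "dist ?e (?e \<otimes> ?e) = dist \<one> ?e"
      using dist_mult_left[of ?e \<one> ?e] by simp
    moreover have "\<exists>x\<in>carrier (Gs i). dist (f i x) z < \<epsilon>" if "z \<in> ball \<one> R" for z
      using elim(3) that by (fastforce simp: dist_commute)
    ultimately show ?case
      using elim(3) unfolding accurate_def by (simp add: dist_commute)
  qed
qed

lemma totally_bounded_ball: "totally_bounded (ball \<one> R)"
proof -
  have "totally_bounded (ball \<one> R')" if "R' > 0" for R'
    unfolding totally_bounded_metric
  proof (intro allI impI)
    fix \<epsilon> :: real assume "\<epsilon> > 0"
    have "R' + \<epsilon> > 0" using \<open>R' > 0\<close> \<open>\<epsilon> > 0\<close> by simp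
    from eventually_approximation[OF this \<open>\<epsilon> > 0\<close>] eventually_approximation[OF \<open>R' > 0\<close> \<open>\<epsilon> > 0\<close>]
    have ev: "eventually (\<lambda>i. finite (pre_ball i (R' + \<epsilon>)) \<and>
        (\<forall>z\<in>ball \<one> R'. f i ` carrier (Gs i) \<inter> ball z \<epsilon> \<noteq> {})) sequentially"
      by eventually_elim (intro conjI; elim conjE)
    obtain i where fin: "finite (pre_ball i (R' + \<epsilon>))"
      and dense: "\<forall>z\<in>ball \<one> R'. f i ` carrier (Gs i) \<inter> ball z \<epsilon> \<noteq> {}"
      using eventually_happens'[OF sequentially_bot ev] by blast
    have "ball \<one> R' \<subseteq> (\<Union>y\<in>f i ` pre_ball i (R' + \<epsilon>). {z. dist y z < \<epsilon>})"
    proof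
      fix z assume z: "z \<in> ball \<one> R'"
      then obtain g where g: "g \<in> carrier (Gs i)" "dist z (f i g) < \<epsilon>"
        using dense by fastforce
      then have "f i g \<in> ball \<one> (R' + \<epsilon>)"
        using z dist_triangle[of \<one> "f i g" z] by simp
      with g show "z \<in> (\<Union>y\<in>f i ` pre_ball i (R' + \<epsilon>). {z. dist y z < \<epsilon>})"
        by (force simp: dist_commute)
    qed
    with fin show "\<exists>k. finite k \<and> ball \<one> R' \<subseteq> (\<Union>y\<in>k. {z. dist y z < \<epsilon>})"
      by blast
  qed
  then have "totally_bounded (ball \<one> (max R 1))" by simp
  then show ?thesis
    by (rule totally_bounded_subset) (simp add: subset_ball)
qed

lemma accurate_inv:
  assumes acc: "accurate i R \<epsilon>" and y: "y \<in> carrier (Gs i)" "f i y \<in> ball \<one> R"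
  shows "dist (f i (inv\<^bsub>Gs i\<^esub> y)) (inv (f i y)) \<le> 2 * \<epsilon>"
proof -
  interpret Gi: group "Gs i" by (rule groups)
  have "dist (f i \<one>\<^bsub>Gs i\<^esub>) (f i y \<otimes> f i (inv\<^bsub>Gs i\<^esub> y)) \<le> \<epsilon>"
    using accurate_mult_inv[OF acc, of y y] y by simp
  then have "dist (f i y \<otimes> f i (inv\<^bsub>Gs i\<^esub> y)) \<one> \<le> 2 * \<epsilon>"
    using accurate_one[OF acc] dist_triangle3[of "f i y \<otimes> f i (inv\<^bsub>Gs i\<^esub> y)" \<one> "f i \<one>\<^bsub>Gs i\<^esub>"]
    by linarith
  then show ?thesis by (simp add: dist_mult_one)
qed

lemma accurate_dist_one_inv:
  assumes "accurate i R \<epsilon>" and "y \<in> carrier (Gs i)" "f i y \<in> ball \<one> R"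
  shows "dist \<one> (f i (inv\<^bsub>Gs i\<^esub> y)) \<le> dist \<one> (f i y) + 2 * \<epsilon>"
  using accurate_inv[OF assms] dist_one_inv[of "f i y"]
    dist_triangle[of \<one> "f i (inv\<^bsub>Gs i\<^esub> y)" "inv (f i y)"]
  by (simp add: dist_commute)

(* The metric is only left invariant, so errors may only be transported by left multiplication;
   this dictates the shapes y^-1 x and t (t s^-1)^-1 = t s t^-1 used below. *)
lemma accurate_left_quotient:
  assumes acc: "accurate i R \<epsilon>" and xy: "x \<in> carrier (Gs i)" "y \<in> carrier (Gs i)"
    and bounds: "dist \<one> (f i x) + 2 * \<epsilon> < R" "dist \<one> (f i y) + 2 * \<epsilon> < R"
  shows "dist (f i (inv\<^bsub>Gs i\<^esub> y \<otimes>\<^bsub>Gs i\<^esub> x)) \<one> \<le> dist (f i x) (f i y) + 3 * \<epsilon>"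
proof -
  interpret Gi: group "Gs i" by (rule groups)
  have "\<epsilon> \<ge> 0" using accurate_one[OF acc] by (meson zero_le_dist order_trans)
  then have in_ball: "f i x \<in> ball \<one> R" "f i y \<in> ball \<one> R" using bounds by auto
  have "dist \<one> (f i (inv\<^bsub>Gs i\<^esub> x)) < R" "dist \<one> (f i (inv\<^bsub>Gs i\<^esub> y)) < R"
    using accurate_dist_one_inv[OF acc xy(1) in_ball(1)] accurate_dist_one_inv[OF acc xy(2) in_ball(2)]
      bounds by linarith+
  then have inv_in_ball: "f i (inv\<^bsub>Gs i\<^esub> x) \<in> ball \<one> R" "f i (inv\<^bsub>Gs i\<^esub> y) \<in> ball \<one> R"
    by simp_all
  have "dist (f i (inv\<^bsub>Gs i\<^esub> y \<otimes>\<^bsub>Gs i\<^esub> x)) (f i (inv\<^bsub>Gs i\<^esub> y) \<otimes> f i x) \<le> \<epsilon>"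
    using accurate_mult_inv[OF acc, of "inv\<^bsub>Gs i\<^esub> y" "inv\<^bsub>Gs i\<^esub> x"] xy inv_in_ball by simp
  moreover have "dist (f i (inv\<^bsub>Gs i\<^esub> y) \<otimes> f i x) \<one> = dist (f i x) (inv (f i (inv\<^bsub>Gs i\<^esub> y)))"
    by (rule dist_mult_one)
  moreover have "dist (f i y) (inv (f i (inv\<^bsub>Gs i\<^esub> y))) \<le> 2 * \<epsilon>"
    using accurate_inv[OF acc, of "inv\<^bsub>Gs i\<^esub> y"] xy inv_in_ball by simp
  ultimately show ?thesis
    using dist_triangle[of "f i (inv\<^bsub>Gs i\<^esub> y \<otimes>\<^bsub>Gs i\<^esub> x)" \<one> "f i (inv\<^bsub>Gs i\<^esub> y) \<otimes> f i x"]
      dist_triangle[of "f i x" "inv (f i (inv\<^bsub>Gs i\<^esub> y))" "f i y"]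
    by linarith
qed

lemma accurate_conj:
  assumes acc: "accurate i R \<epsilon>" and ts: "t \<in> carrier (Gs i)" "s \<in> carrier (Gs i)"
    and bound: "dist \<one> (f i t) + dist \<one> (f i s) + 3 * \<epsilon> < R"
  shows "dist (f i (t \<otimes>\<^bsub>Gs i\<^esub> s \<otimes>\<^bsub>Gs i\<^esub> inv\<^bsub>Gs i\<^esub> t)) (f i t \<otimes> f i s \<otimes> inv (f i t))
         \<le> 4 * \<epsilon>"
proof -
  interpret Gi: group "Gs i" by (rule groups)
  let ?u = "t \<otimes>\<^bsub>Gs i\<^esub> inv\<^bsub>Gs i\<^esub> s" and ?v = "s \<otimes>\<^bsub>Gs i\<^esub> inv\<^bsub>Gs i\<^esub> t"
  have "\<epsilon> \<ge> 0" using accurate_one[OF acc] by (meson zero_le_dist order_trans)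
  then have "dist \<one> (f i t) < R" "dist \<one> (f i s) < R"
    using bound zero_le_dist[of \<one> "f i t"] zero_le_dist[of \<one> "f i s"] by linarith+
  then have in_ball: "f i t \<in> ball \<one> R" "f i s \<in> ball \<one> R" by simp_all
  have "dist (f i ?u) (f i t \<otimes> f i (inv\<^bsub>Gs i\<^esub> s)) \<le> \<epsilon>"
    using accurate_mult_inv[OF acc] ts in_ball by simp
  moreover have "dist \<one> (f i t \<otimes> f i (inv\<^bsub>Gs i\<^esub> s)) \<le> dist \<one> (f i t) + dist \<one> (f i s) + 2 * \<epsilon>"
    using dist_one_mult_le[of "f i t" "f i (inv\<^bsub>Gs i\<^esub> s)"]
      accurate_dist_one_inv[OF acc ts(2) in_ball(2)] by linarith
  ultimately have "dist \<one> (f i ?u) < R"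
    using bound dist_triangle[of \<one> "f i ?u" "f i t \<otimes> f i (inv\<^bsub>Gs i\<^esub> s)"]
    by (simp add: dist_commute)
  then have "dist (f i (t \<otimes>\<^bsub>Gs i\<^esub> inv\<^bsub>Gs i\<^esub> ?u)) (f i t \<otimes> f i (inv\<^bsub>Gs i\<^esub> ?u)) \<le> \<epsilon>"
    using accurate_mult_inv[OF acc] ts in_ball by simp
  moreover have "t \<otimes>\<^bsub>Gs i\<^esub> inv\<^bsub>Gs i\<^esub> ?u = t \<otimes>\<^bsub>Gs i\<^esub> s \<otimes>\<^bsub>Gs i\<^esub> inv\<^bsub>Gs i\<^esub> t"
    using ts by (simp add: Gi.inv_mult_group Gi.m_assoc)
  moreover have "inv\<^bsub>Gs i\<^esub> ?u = ?v"
    using ts by (simp add: Gi.inv_mult_group)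
  ultimately have conj_step:
    "dist (f i (t \<otimes>\<^bsub>Gs i\<^esub> s \<otimes>\<^bsub>Gs i\<^esub> inv\<^bsub>Gs i\<^esub> t)) (f i t \<otimes> f i ?v) \<le> \<epsilon>"
    by simp
  have "dist (f i ?v) (f i s \<otimes> f i (inv\<^bsub>Gs i\<^esub> t)) \<le> \<epsilon>"
    using accurate_mult_inv[OF acc] ts in_ball by simp
  moreover have "dist (f i s \<otimes> f i (inv\<^bsub>Gs i\<^esub> t)) (f i s \<otimes> inv (f i t)) \<le> 2 * \<epsilon>"
    using accurate_inv[OF acc ts(1) in_ball(1)] by simp
  ultimately have "dist (f i ?v) (f i s \<otimes> inv (f i t)) \<le> 3 * \<epsilon>"
    using dist_triangle[of "f i ?v" "f i s \<otimes> inv (f i t)" "f i s \<otimes> f i (inv\<^bsub>Gs i\<^esub> t)"]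
    by linarith
  then have "dist (f i t \<otimes> f i ?v) (f i t \<otimes> f i s \<otimes> inv (f i t)) \<le> 3 * \<epsilon>"
    by (simp add: m_assoc)
  with conj_step show ?thesis
    using dist_triangle[of "f i (t \<otimes>\<^bsub>Gs i\<^esub> s \<otimes>\<^bsub>Gs i\<^esub> inv\<^bsub>Gs i\<^esub> t)" "f i t \<otimes> f i s \<otimes> inv (f i t)"
        "f i t \<otimes> f i ?v"]
    by linarith
qed

end

locale small_generators = discrete_approx G Gs f
  for G :: "'g::metric_space monoid" (structure) and Gs :: "nat \<Rightarrow> 'a monoid" and f +
  fixes r :: real
  assumes r_pos: "r > 0"
    and ball_in_component: "ball \<one> r \<subseteq> connected_component_set UNIV \<one>"
begin

abbreviation H :: "nat \<Rightarrow> 'a set" where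
  "H i \<equiv> generate (Gs i) (pre_ball i r)"

lemma pre_ball_subset_H: "pre_ball i r \<subseteq> H i"
  by (auto intro: generate.incl)

lemma subgroup_H: "subgroup (H i) (Gs i)"
  by (rule group.generate_is_subgroup[OF groups]) auto

definition captured :: "'g \<Rightarrow> bool" where
  "captured p \<longleftrightarrow>
     eventually (\<lambda>i. \<forall>x\<in>carrier (Gs i). dist (f i x) p < r/4 \<longrightarrow> x \<in> H i) sequentially"

lemma captured_one: "captured \<one>"
  unfolding captured_def
proof (intro always_eventually allI ballI impI)
  fix i x assume "x \<in> carrier (Gs i)" "dist (f i x) \<one> < r/4"
  then have "x \<in> pre_ball i r" using r_pos by (simp add: dist_commute)
  then show "x \<in> H i" using pre_ball_subset_H by blast
qed

lemma mem_H_if_close: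
  assumes acc: "accurate i R (r/16)" and x: "x \<in> carrier (Gs i)" and y: "y \<in> H i"
    and bounds: "dist \<one> (f i x) + 2 * (r/16) < R" "dist \<one> (f i y) + 2 * (r/16) < R"
    and close: "dist (f i x) (f i y) < 3/4 * r"
  shows "x \<in> H i"
proof -
  interpret Gi: group "Gs i" by (rule groups)
  have y_carrier: "y \<in> carrier (Gs i)" using y subgroup.subset[OF subgroup_H] by blast
  from accurate_left_quotient[OF acc x y_carrier bounds] close r_pos
  have "dist (f i (inv\<^bsub>Gs i\<^esub> y \<otimes>\<^bsub>Gs i\<^esub> x)) \<one> < r" by linarith
  then have "inv\<^bsub>Gs i\<^esub> y \<otimes>\<^bsub>Gs i\<^esub> x \<in> pre_ball i r"
    using x y_carrier by (simp add: dist_commute)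
  then have "inv\<^bsub>Gs i\<^esub> y \<otimes>\<^bsub>Gs i\<^esub> x \<in> H i"
    using pre_ball_subset_H by blast
  with y have "y \<otimes>\<^bsub>Gs i\<^esub> (inv\<^bsub>Gs i\<^esub> y \<otimes>\<^bsub>Gs i\<^esub> x) \<in> H i"
    by (rule subgroup.m_closed[OF subgroup_H])
  then show ?thesis
    using x y_carrier by (simp add: Gi.m_assoc[symmetric])
qed

lemma captured_nearby:
  assumes "captured q" and "dist p q < r/4"
  shows "captured p"
proof -
  define R where "R = dist \<one> p + r"
  have "R > 0" using r_pos zero_le_dist[of \<one> p] unfolding R_def by linarith
  have "r/16 > 0" using r_pos by simp
  from assms(1)[unfolded captured_def] eventually_accurate[OF \<open>R > 0\<close> \<open>r/16 > 0\<close>]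
  show ?thesis unfolding captured_def
  proof eventually_elim
    case (elim i)
    show ?case
    proof (intro ballI impI)
      fix x assume x: "x \<in> carrier (Gs i)" and near_p: "dist (f i x) p < r/4"
      have "dist \<one> q < R"
        using dist_triangle[of \<one> q p] assms(2) r_pos by (simp add: R_def dist_commute)
      then obtain y where y: "y \<in> carrier (Gs i)" "dist (f i y) q < r/16"
        using accurate_dense[OF elim(2)] by (meson mem_ball)
      then have "y \<in> H i" using elim(1) r_pos by simp
      show "x \<in> H i"
      proof (rule mem_H_if_close[OF elim(2) x \<open>y \<in> H i\<close>])
        show "dist \<one> (f i x) + 2 * (r/16) < R"
          using dist_triangle[of \<one> "f i x" p] dist_commute[of p "f i x"] near_p R_def r_pos
          by linarith
        show "dist \<one> (f i y) + 2 * (r/16) < R"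
          using dist_triangle[of \<one> "f i y" p] dist_triangle[of p "f i y" q] dist_commute[of q "f i y"]
            assms(2) y(2) R_def r_pos by linarith
        show "dist (f i x) (f i y) < 3/4 * r"
          using dist_triangle[of "f i x" "f i y" p] dist_triangle[of p "f i y" q]
            dist_commute[of q "f i y"] near_p assms(2) y(2) r_pos by linarith
      qed
    qed
  qed
qed

lemma captured_component:
  assumes "p \<in> connected_component_set UNIV \<one>"
  shows "captured p"
proof -
  let ?C = "connected_component_set UNIV \<one>"
  have local_step: "\<exists>T. openin (top_of_set ?C) T \<and> a \<in> T \<and> (\<forall>x\<in>T. \<forall>y\<in>T. captured x \<longrightarrow> captured y)"
    if "a \<in> ?C" for a
  proof (intro exI conjI ballI impI)
    show "openin (top_of_set ?C) (?C \<inter> ball a (r/8))"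
      by (rule openin_open_Int) (rule open_ball)
    show "a \<in> ?C \<inter> ball a (r/8)" using that r_pos by simp
    fix x y assume x: "x \<in> ?C \<inter> ball a (r/8)" and y: "y \<in> ?C \<inter> ball a (r/8)" and "captured x"
    have "dist a x < r/8" "dist a y < r/8" using x y by auto
    then have "dist y x < r/4" using dist_triangle3[of y x a] by linarith
    with \<open>captured x\<close> show "captured y" by (rule captured_nearby)
  qed
  show ?thesis
    by (rule connected_induction_simple[OF connected_connected_component _ assms captured_one local_step])
      (simp add: connected_component_refl)
qed

lemma eventually_captured_uniformly:
  "eventually (\<lambda>i. \<forall>x\<in>carrier (Gs i). \<forall>p\<in>connected_component_set UNIV \<one> \<inter> ball \<one> R.
      dist (f i x) p < r/8 \<longrightarrow> x \<in> H i) sequentially"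
proof -
  let ?P = "connected_component_set UNIV \<one> \<inter> ball \<one> R"
  have "?P \<subseteq> ball \<one> R" by (rule Int_lower2)
  with totally_bounded_ball have "totally_bounded ?P" by (rule totally_bounded_subset)
  moreover have "r/8 > 0" using r_pos by simp
  ultimately obtain K where K: "finite K" "K \<subseteq> ?P" "?P \<subseteq> (\<Union>c\<in>K. ball c (r/8))"
    by (rule totally_bounded_obtains_net)
  have "\<forall>c\<in>K. captured c" using K(2) captured_component by blast
  then have "eventually (\<lambda>i. \<forall>c\<in>K. \<forall>x\<in>carrier (Gs i). dist (f i x) c < r/4 \<longrightarrow> x \<in> H i)
      sequentially"
    unfolding captured_def by (rule eventually_ball_finite[OF K(1)])
  then show ?thesis
  proof eventually_elim
    case (elim i)
    show ?case
    proof (intro ballI impI)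
      fix x p assume x: "x \<in> carrier (Gs i)" and "p \<in> ?P" and near_p: "dist (f i x) p < r/8"
      then obtain c where "c \<in> K" "dist c p < r/8" using K(3) by auto
      then have "dist (f i x) c < r/4"
        using near_p dist_triangle[of "f i x" c p] dist_commute[of c p] by linarith
      then show "x \<in> H i" using elim \<open>c \<in> K\<close> x by blast
    qed
  qed
qed

lemma eventually_conj_in_H:
  assumes "R > 0"
  shows "eventually (\<lambda>i. \<forall>t\<in>carrier (Gs i). \<forall>s\<in>pre_ball i r. f i t \<in> ball \<one> R \<longrightarrow>
      t \<otimes>\<^bsub>Gs i\<^esub> s \<otimes>\<^bsub>Gs i\<^esub> inv\<^bsub>Gs i\<^esub> t \<in> H i) sequentially"
proof -
  have "R + 2 * r > 0" using assms r_pos by simp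
  have "r/64 > 0" using r_pos by simp
  from eventually_accurate[OF \<open>R + 2 * r > 0\<close> \<open>r/64 > 0\<close>] eventually_captured_uniformly[of "2 * R + r"]
  show ?thesis
  proof eventually_elim
    case (elim i)
    interpret Gi: group "Gs i" by (rule groups)
    show ?case
    proof (intro ballI impI)
      fix t s assume t: "t \<in> carrier (Gs i)" and s: "s \<in> pre_ball i r" and "f i t \<in> ball \<one> R"
      let ?k = "f i t \<otimes> f i s \<otimes> inv (f i t)"
      have bounds: "dist \<one> (f i t) < R" "dist \<one> (f i s) < r"
        using \<open>f i t \<in> ball \<one> R\<close> s by auto
      have s_carrier: "s \<in> carrier (Gs i)" using s by simp
      have "?k \<in> connected_component_set UNIV \<one>"
        using s ball_in_component by (intro conj_in_connected_component) auto
      moreover have "dist \<one> ?k < 2 * R + r"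
        using dist_one_mult_le[of "f i t \<otimes> f i s" "inv (f i t)"] dist_one_mult_le[of "f i t" "f i s"]
          dist_one_inv[of "f i t"] dist_commute[of "f i t" \<one>] bounds by linarith
      ultimately have k: "?k \<in> connected_component_set UNIV \<one> \<inter> ball \<one> (2 * R + r)"
        by simp
      have "dist \<one> (f i t) + dist \<one> (f i s) + 3 * (r/64) < R + 2 * r"
        using bounds r_pos by linarith
      from accurate_conj[OF elim(1) t s_carrier this]
      have "dist (f i (t \<otimes>\<^bsub>Gs i\<^esub> s \<otimes>\<^bsub>Gs i\<^esub> inv\<^bsub>Gs i\<^esub> t)) ?k < r/8"
        using r_pos by linarith
      moreover have "t \<otimes>\<^bsub>Gs i\<^esub> s \<otimes>\<^bsub>Gs i\<^esub> inv\<^bsub>Gs i\<^esub> t \<in> carrier (Gs i)"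
        using t s_carrier by simp
      ultimately show "t \<otimes>\<^bsub>Gs i\<^esub> s \<otimes>\<^bsub>Gs i\<^esub> inv\<^bsub>Gs i\<^esub> t \<in> H i"
        using elim(2) k by blast
    qed
  qed
qed

lemma eventually_normal: "eventually (\<lambda>i. H i \<lhd> Gs i) sequentially"
proof -
  obtain R0 where "R0 > 0"
    and gen: "eventually (\<lambda>i. generate (Gs i) (pre_ball i R0) = carrier (Gs i) \<and>
                               \<one>\<^bsub>Gs i\<^esub> \<in> pre_ball i R0) sequentially"
    by (rule eventually_generating)
  have "R0 + 2 > 0" using \<open>R0 > 0\<close> by simp
  from gen eventually_accurate[OF \<open>R0 > 0\<close> zero_less_one] eventually_conj_in_H[OF \<open>R0 + 2 > 0\<close>]
  show ?thesis
  proof eventually_elim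
    case (elim i)
    interpret Gi: group "Gs i" by (rule groups)
    show "H i \<lhd> Gs i"
    proof (rule Gi.normal_generate_by_generators)
      show "pre_ball i r \<subseteq> carrier (Gs i)" "pre_ball i R0 \<subseteq> carrier (Gs i)" by auto
      show "generate (Gs i) (pre_ball i R0) = carrier (Gs i)" using elim(1) by blast
    next
      fix t s assume t: "t \<in> pre_ball i R0" and s: "s \<in> pre_ball i r"
      then have t_carrier: "t \<in> carrier (Gs i)" and "dist \<one> (f i t) < R0" by auto
      then have "f i t \<in> ball \<one> (R0 + 2)" by simp
      with t_carrier s show "t \<otimes>\<^bsub>Gs i\<^esub> s \<otimes>\<^bsub>Gs i\<^esub> inv\<^bsub>Gs i\<^esub> t \<in> H i"
        using elim(3) by blast
      have "dist \<one> (f i (inv\<^bsub>Gs i\<^esub> t)) \<le> dist \<one> (f i t) + 2 * 1"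
        using accurate_dist_one_inv[OF elim(2)] t by blast
      with \<open>dist \<one> (f i t) < R0\<close> have "f i (inv\<^bsub>Gs i\<^esub> t) \<in> ball \<one> (R0 + 2)" by simp
      then have "inv\<^bsub>Gs i\<^esub> t \<otimes>\<^bsub>Gs i\<^esub> s \<otimes>\<^bsub>Gs i\<^esub> inv\<^bsub>Gs i\<^esub> (inv\<^bsub>Gs i\<^esub> t) \<in> H i"
        using elim(3) t_carrier s by blast
      then show "inv\<^bsub>Gs i\<^esub> t \<otimes>\<^bsub>Gs i\<^esub> s \<otimes>\<^bsub>Gs i\<^esub> t \<in> H i"
        using t by simp
    qed
  qed
qed

end

theorem mainTheorem13:
  fixes G :: "'g::metric_space monoid"
    and Gs :: "nat \<Rightarrow> 'a monoid"
    and f :: "nat \<Rightarrow> 'a \<Rightarrow> 'g"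
    and r :: real
  assumes "lie_group TYPE('e::euclidean_space) G"
    and "left_invariant_metric G"
    and "\<And>i. group (Gs i)"
    and "discrete_approximation Gs G f"
    and "r > 0"
    and "ball \<one>\<^bsub>G\<^esub> r \<subseteq> connected_component_set UNIV \<one>\<^bsub>G\<^esub>"
  shows "\<exists>N. \<forall>i\<ge>N.
           generate (Gs i) {g \<in> carrier (Gs i). f i g \<in> ball \<one>\<^bsub>G\<^esub> r} \<lhd> Gs i"
proof -
  have "small_generators G Gs f r"
    using assms
    by (intro small_generators.intro discrete_approx.intro left_invariant_metric_group.intro
        left_invariant_metric_group_axioms.intro discrete_approx_axioms.intro
        small_generators_axioms.intro) (auto simp: lie_group_def)
  then interpret small_generators G Gs f r .
  show ?thesis
    using eventually_normal by (simp add: eventually_sequentially)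
qed

end
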